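(* Let $\Gamma_1,\dots,\Gamma_d$ be directed graphs on a common finite vertex set $\mathcal A$ that do not satisfy condition $(\star)$. Then for every group $G$ generated by $d$ elements $g_1,\dots,g_d$, the corresponding $G$-nearest-neighbor subshift of finite type $X=\{x\in\mathcal A^G : \forall h\in G,\ \forall 1\le i\le d,\ x_h\to x_{hg_i}\text{ is an edge of }\Gamma_i\}$ is empty.
   Context: Condition $(\star)$ for a family of directed graphs $\Gamma_1,\dots,\Gamma_d$ on vertex set $\mathcal A$: there exist a nonempty subset $\mathcal A'\subseteq\mathcal A$ and a function $\Psi:\mathcal A'\times\{g_1,\dots,g_d\}\to\mathcal A'$ such that for every $a\in\mathcal A'$ and every $1\le i\le d$, $a\to\Psi(a,g_i)$ is an edge of $\Gamma_i$. *)

theory Defs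
  imports "HOL-Algebra.Generated_Groups"
begin

text \<open>A family of directed graphs \<Gamma>_1,...,\<Gamma>_d on vertex set A is given by edge
  relations E i (for i in {1..d}), E i \<subseteq> A \<times> A. Condition (star): there is a nonempty
  A' \<subseteq> A and a map \<Psi> : A' \<times> {g_1..g_d} \<rightarrow> A' (the g_i regarded as d formal labels,
  i.e. indexed by i) with (a, \<Psi> a i) \<in> E i for all a \<in> A', 1 \<le> i \<le> d.\<close>
definition star_condition :: "'a set \<Rightarrow> nat \<Rightarrow> (nat \<Rightarrow> ('a \<times> 'a) set) \<Rightarrow> bool" where
  "star_condition A d E \<longleftrightarrow>
     (\<exists>A' \<Psi>. A' \<noteq> {} \<and> A' \<subseteq> A \<and>
        (\<forall>a\<in>A'. \<forall>i\<in>{1..d}. \<Psi> a i \<in> A' \<and> (a, \<Psi> a i) \<in> E i))"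

definition nn_sft :: "('g, 'm) monoid_scheme \<Rightarrow> nat \<Rightarrow> (nat \<Rightarrow> 'g) \<Rightarrow> 'a set \<Rightarrow> (nat \<Rightarrow> ('a \<times> 'a) set)
    \<Rightarrow> ('g \<Rightarrow> 'a) set" where
  "nn_sft G d g A E =
     {x \<in> carrier G \<rightarrow>\<^sub>E A. \<forall>h\<in>carrier G. \<forall>i\<in>{1..d}. (x h, x (h \<otimes>\<^bsub>G\<^esub> g i)) \<in> E i}"

end

theory Submission
  imports Defs
begin

text \<open>The set of symbols occurring in a configuration x already witnesses condition (star):
  for each symbol a choose a position h with x h = a and let \<Psi> a i = x (h g_i).\<close>

lemma star_condition_if_nn_sft_elem:
  fixes G (structure)
  assumes "monoid G"
    and "\<forall>i\<in>{1..d}. g i \<in> carrier G"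
    and "x \<in> nn_sft G d g A E"
  shows "star_condition A d E"
  unfolding star_condition_def
proof (intro exI conjI ballI)
  interpret monoid G by fact
  have x_ext: "x \<in> carrier G \<rightarrow>\<^sub>E A"
    and x_edge: "\<forall>h\<in>carrier G. \<forall>i\<in>{1..d}. (x h, x (h \<otimes> g i)) \<in> E i"
    using assms(3) unfolding nn_sft_def by auto
  define pos where "pos a = (SOME h. h \<in> carrier G \<and> x h = a)" for a
  show "x ` carrier G \<noteq> {}"
    using one_closed by blast
  show "x ` carrier G \<subseteq> A"
    using x_ext by auto
  fix a i
  assume "a \<in> x ` carrier G" and i: "i \<in> {1..d}"
  then have pos: "pos a \<in> carrier G" "x (pos a) = a"
    unfolding pos_def by (auto intro: someI2)
  show "x (pos a \<otimes> g i) \<in> x ` carrier G"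
    using pos(1) i assms(2) by auto
  show "(a, x (pos a \<otimes> g i)) \<in> E i"
    using x_edge pos i by force
qed

theorem mainTheorem2:
  fixes A :: "'a set" and d :: nat and E :: "nat \<Rightarrow> ('a \<times> 'a) set"
    and G :: "('g, 'm) monoid_scheme" and g :: "nat \<Rightarrow> 'g"
  assumes "finite A"
    and "\<forall>i\<in>{1..d}. E i \<subseteq> A \<times> A"
    and "\<not> star_condition A d E"
    and "group G"
    and "\<forall>i\<in>{1..d}. g i \<in> carrier G"
    and "generate G (g ` {1..d}) = carrier G"
  shows "nn_sft G d g A E = {}"
  using star_condition_if_nn_sft_elem[OF group.is_monoid[OF assms(4)] assms(5)] assms(3)
  by blast

end
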